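(* Let $d\ge3$, $\alpha>2$, $p\in(1,\frac{10}{9})$ and $q=p/(p-1)$. Suppose $g(x,y)\le\varepsilon(|x-y|^{-\alpha}\wedge1)$ for all $x,y$, where $\varepsilon>0$ is small enough that $\sup_{x,y}\Pi_{(x,y)}\big(e^{q\int_0^\infty g(B_s,\widetilde B_s)ds}\big)\le2$. Let $\phi\in C_c^+(\mathbb{R}^d)$ be supported in $\{|x|\le K\}$ with $K>2$. Then there is a constant $C$ (depending on $d,\alpha,g,\phi,p$, not on $t,x,y$) such that for all $t\ge0$ and $x,y\in\mathbb{R}^d$, $$V_t^{\phi,\phi}(x,y)\le C\,\widetilde Q(t,x)\,\widetilde Q(t,y).$$
   Context: Under $\Pi_{(x,y)}$, $B,\widetilde B$ are independent $d$-dimensional Brownian motions started at $x,y$. $p_t(x,y)=(2\pi t)^{-d/2}e^{-|y-x|^2/(2t)}$, $Q_tf(x)=\int_0^t\int p_s(x,y)f(y)dyds$, $$V_t^{\phi,\phi}(x,y)=\Pi_{(x,y)}\Big\{\int_0^t\big[\phi(B_s)Q_{t-s}\phi(\widetilde B_s)+\phi(\widetilde B_s)Q_{t-s}\phi(B_s)\big]e^{\int_0^sg(B_u,\widetilde B_u)du}ds\Big\},$$ and $\widetilde Q(t,x)=\int_0^t\Big[\int_{|z|\le K}p_s(x,z)dz\Big]^{1/p}ds$. *)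

theory Defs
  imports "HOL-Probability.Probability"
begin

definition heat_kernel :: "real \<Rightarrow> real^'d \<Rightarrow> real^'d \<Rightarrow> real" where
  "heat_kernel t x y =
     (2 * pi * t) powr (- real CARD('d) / 2) * exp (- (norm (y - x))\<^sup>2 / (2 * t))"

definition Qop :: "real \<Rightarrow> (real^'d \<Rightarrow> real) \<Rightarrow> real^'d \<Rightarrow> real" where
  "Qop t f x = (LINT s:{0..t}|lborel. (LINT y|lborel. heat_kernel s x y * f y))"

definition Qtilde :: "real \<Rightarrow> real \<Rightarrow> real \<Rightarrow> real^'d \<Rightarrow> real" where
  "Qtilde K p t x =
     (LINT s:{0..t}|lborel. (LINT z:{z. norm z \<le> K}|lborel. heat_kernel s x z) powr (1 / p))"

text \<open>\<open>W\<close>, \<open>W'\<close> are independent standard \<open>d\<close>-dimensional Brownian motions (started at 0)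
  on the probability space \<open>M\<close>: continuous paths, \<open>W 0 = 0\<close>, and for any times
  \<open>0 \<le> t_0 < t_1 < ... < t_n\<close> the increments of both processes are jointly independent,
  each increment \<open>W t_{i+1} - W t_i\<close> having the Gaussian density \<open>p_{t_{i+1}-t_i}(0,.)\<close>.\<close>
definition indep_std_BM_pair ::
  "'a measure \<Rightarrow> (real \<Rightarrow> 'a \<Rightarrow> real^'d) \<Rightarrow> (real \<Rightarrow> 'a \<Rightarrow> real^'d) \<Rightarrow> bool" where
  "indep_std_BM_pair M W W' \<longleftrightarrow>
     prob_space M \<and>
     (\<forall>t. W t \<in> borel_measurable M \<and> W' t \<in> borel_measurable M) \<and>
     (\<forall>\<omega>\<in>space M. W 0 \<omega> = 0 \<and> W' 0 \<omega> = 0) \<and>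
     (\<forall>\<omega>\<in>space M. continuous_on {0..} (\<lambda>s. W s \<omega>) \<and> continuous_on {0..} (\<lambda>s. W' s \<omega>)) \<and>
     (\<forall>(ts :: nat \<Rightarrow> real) n. 0 \<le> ts 0 \<and> (\<forall>i<n. ts i < ts (Suc i)) \<longrightarrow>
        prob_space.indep_vars M (\<lambda>_. borel)
          (\<lambda>(i, b) \<omega>. if b then W (ts (Suc i)) \<omega> - W (ts i) \<omega>
                           else W' (ts (Suc i)) \<omega> - W' (ts i) \<omega>)
          ({..<n} \<times> (UNIV :: bool set)) \<and>
        (\<forall>i<n. distributed M lborel (\<lambda>\<omega>. W (ts (Suc i)) \<omega> - W (ts i) \<omega>)
                  (\<lambda>z. ennreal (heat_kernel (ts (Suc i) - ts i) 0 z)) \<and>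
               distributed M lborel (\<lambda>\<omega>. W' (ts (Suc i)) \<omega> - W' (ts i) \<omega>)
                  (\<lambda>z. ennreal (heat_kernel (ts (Suc i) - ts i) 0 z))))"

definition exp_enn :: "ennreal \<Rightarrow> ennreal" where
  "exp_enn x = (if x = \<top> then \<top> else ennreal (exp (enn2real x)))"

text \<open>Under \<open>Pi_(x,y)\<close>: \<open>B = x + W\<close>, \<open>Btilde = y + W'\<close>.
  \<open>V_t^{phi,phi}(x,y)\<close> (expectation of a nonnegative quantity, as an extended nonnegative real).\<close>
definition Vphi ::
  "'a measure \<Rightarrow> (real \<Rightarrow> 'a \<Rightarrow> real^'d) \<Rightarrow> (real \<Rightarrow> 'a \<Rightarrow> real^'d) \<Rightarrow>
   (real^'d \<Rightarrow> real^'d \<Rightarrow> real) \<Rightarrow> (real^'d \<Rightarrow> real) \<Rightarrow> real \<Rightarrow> real^'d \<Rightarrow> real^'d \<Rightarrow> ennreal" where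
  "Vphi M W W' g \<phi> t x y =
     (\<integral>\<^sup>+ \<omega>. ennreal
        (LINT s:{0..t}|lborel.
           (\<phi> (x + W s \<omega>) * Qop (t - s) \<phi> (y + W' s \<omega>)
            + \<phi> (y + W' s \<omega>) * Qop (t - s) \<phi> (x + W s \<omega>))
           * exp (LINT u:{0..s}|lborel. g (x + W u \<omega>) (y + W' u \<omega>))) \<partial>M)"

end

theory Submission
  imports Defs
begin

(*
  Write P_s for the heat semigroup. Using Q_{t-s} phi = int_0^{t-s} P_r phi dr and
  int_0^s g <= int_0^oo g, Tonelli reduces V_t(x,y) to
  int_{0<s<=t} int_{0<r<=t-s} E[phi(B_s) P_r phi(Btilde_s) e^{int_0^oo g}] dr ds plus the symmetric term.
  Hoelder's inequality with exponents p and q (in the form of Young's inequality with an optimised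
  weight) splits off the exponential, whose q-th moment is at most 2 by assumption. Since
  phi <= Phi 1_K and P_r 1_K <= 1, the p-th moment of phi(B_s) P_r phi(Btilde_s) is at most
  Phi^{2p} P_s 1_K(x) P_s (P_r 1_K)(y) = Phi^{2p} P_s 1_K(x) P_{s+r} 1_K(y), by independence of
  B and Btilde and the Chapman-Kolmogorov equation. Taking p-th roots and integrating
  over the triangle 0 < s, 0 < r <= t - s gives the claim with C = 4 Phi^2.
  Only the exponential moment bound on g enters.
*)

section \<open>Integration and measurability\<close>

lemma ennreal_integral_le_nn_integral: "ennreal (integral\<^sup>L N f) \<le> (\<integral>\<^sup>+x. ennreal (f x) \<partial>N)"
proof (cases "integrable N f")
  case True
  then have "integral\<^sup>L N f \<le> integral\<^sup>L N (\<lambda>x. max 0 (f x))"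
    by (intro integral_mono) auto
  then have "ennreal (integral\<^sup>L N f) \<le> (\<integral>\<^sup>+x. ennreal (max 0 (f x)) \<partial>N)"
    using True by (subst nn_integral_eq_integral) (auto intro: ennreal_leI)
  also have "\<dots> = (\<integral>\<^sup>+x. ennreal (f x) \<partial>N)"
    by (intro nn_integral_cong) (auto simp: max_def ennreal_neg)
  finally show ?thesis .
qed (simp add: not_integrable_integral_eq)

lemma ennreal_set_integral_le_nn_integral:
  "ennreal (set_lebesgue_integral N S f) \<le> (\<integral>\<^sup>+x\<in>S. ennreal (f x) \<partial>N)"
proof -
  have "ennreal (set_lebesgue_integral N S f) \<le> (\<integral>\<^sup>+x. ennreal (indicator S x *\<^sub>R f x) \<partial>N)"
    unfolding set_lebesgue_integral_def by (rule ennreal_integral_le_nn_integral)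
  also have "\<dots> = (\<integral>\<^sup>+x\<in>S. ennreal (f x) \<partial>N)"
    by (intro nn_integral_cong) (auto simp: indicator_def)
  finally show ?thesis .
qed

lemma nn_integral_lborel_translate:
  fixes c :: "'a::euclidean_space"
  assumes [measurable]: "F \<in> borel_measurable borel"
  shows "(\<integral>\<^sup>+x. F x \<partial>lborel) = (\<integral>\<^sup>+x. F (c + x) \<partial>lborel)"
proof -
  have "(\<integral>\<^sup>+x. F x \<partial>lborel) = (\<integral>\<^sup>+x. F x \<partial>distr lborel borel ((+) c))"
    by (simp add: lborel_distr_plus)
  also have "\<dots> = (\<integral>\<^sup>+x. F (c + x) \<partial>lborel)"
    by (subst nn_integral_distr) auto
  finally show ?thesis .
qed

lemma nn_integral_triangle_le_product:
  fixes f h :: "real \<Rightarrow> ennreal"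
  assumes [measurable]: "f \<in> borel_measurable borel" "h \<in> borel_measurable borel"
  shows "(\<integral>\<^sup>+s\<in>{0<..t}. (\<integral>\<^sup>+r\<in>{0<..t - s}. f s * h (s + r) \<partial>lborel) \<partial>lborel)
    \<le> (\<integral>\<^sup>+s\<in>{0..t}. f s \<partial>lborel) * (\<integral>\<^sup>+u\<in>{0..t}. h u \<partial>lborel)"
proof -
  let ?H = "\<integral>\<^sup>+u\<in>{0..t}. h u \<partial>lborel"
  have inner: "(\<integral>\<^sup>+r\<in>{0<..t - s}. f s * h (s + r) \<partial>lborel) \<le> f s * ?H" if "s \<in> {0<..t}" for s
  proof -
    have "(\<integral>\<^sup>+r\<in>{0<..t - s}. f s * h (s + r) \<partial>lborel)
        = f s * (\<integral>\<^sup>+r. h (s + r) * indicator {0<..t - s} r \<partial>lborel)"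
      by (subst nn_integral_cmult[symmetric]) (auto simp: ac_simps)
    also have "(\<integral>\<^sup>+r. h (s + r) * indicator {0<..t - s} r \<partial>lborel)
        = (\<integral>\<^sup>+u. h u * indicator {0<..t - s} (u - s) \<partial>lborel)"
      by (subst nn_integral_lborel_translate[where c = s]) auto
    also have "\<dots> \<le> ?H"
      using that by (intro nn_integral_mono) (auto simp: indicator_def)
    finally show ?thesis
      by (simp add: mult_left_mono)
  qed
  have "(\<integral>\<^sup>+s\<in>{0<..t}. (\<integral>\<^sup>+r\<in>{0<..t - s}. f s * h (s + r) \<partial>lborel) \<partial>lborel)
      \<le> (\<integral>\<^sup>+s. f s * indicator {0..t} s * ?H \<partial>lborel)"
    using inner by (intro nn_integral_mono) (auto simp: indicator_def)
  also have "\<dots> = (\<integral>\<^sup>+s\<in>{0..t}. f s \<partial>lborel) * ?H"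
    by (rule nn_integral_multc) measurable
  finally show ?thesis .
qed

lemma (in sigma_finite_measure) nn_integral_triangle_swap:
  fixes H :: "'a \<Rightarrow> real \<Rightarrow> real \<Rightarrow> ennreal"
  assumes meas_r: "\<And>s. (\<lambda>(\<omega>, r). H \<omega> s r) \<in> borel_measurable (M \<Otimes>\<^sub>M lborel)"
    and meas_s: "(\<lambda>(\<omega>, s). \<integral>\<^sup>+r\<in>{0<..t - s}. H \<omega> s r \<partial>lborel) \<in> borel_measurable (M \<Otimes>\<^sub>M lborel)"
  shows "(\<integral>\<^sup>+\<omega>. (\<integral>\<^sup>+s\<in>{0<..t}. (\<integral>\<^sup>+r\<in>{0<..t - s}. H \<omega> s r \<partial>lborel) \<partial>lborel) \<partial>M)
    = (\<integral>\<^sup>+s\<in>{0<..t}. (\<integral>\<^sup>+r\<in>{0<..t - s}. (\<integral>\<^sup>+\<omega>. H \<omega> s r \<partial>M) \<partial>lborel) \<partial>lborel)"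
proof -
  interpret pair_sigma_finite M "lborel :: real measure" ..
  have [measurable]: "(\<lambda>\<omega>. H \<omega> s r) \<in> borel_measurable M" for s r
    using measurable_compose[OF measurable_Pair2' meas_r, of r] by simp
  have [measurable]: "(\<lambda>\<omega>. \<integral>\<^sup>+r\<in>{0<..t - s}. H \<omega> s r \<partial>lborel) \<in> borel_measurable M" for s
    using measurable_compose[OF measurable_Pair2' meas_s, of s] by simp
  have "(\<lambda>(\<omega>, s). (\<integral>\<^sup>+r\<in>{0<..t - s}. H \<omega> s r \<partial>lborel) * indicator {0<..t} s) \<in> borel_measurable (M \<Otimes>\<^sub>M lborel)"
    using meas_s by (simp add: split_beta')
  note Fubini_s = Fubini'[OF this]
  have "(\<lambda>(\<omega>, r). H \<omega> s r * indicator {0<..t - s} r) \<in> borel_measurable (M \<Otimes>\<^sub>M lborel)" for s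
    using meas_r[of s] by (simp add: split_beta')
  note Fubini_r = Fubini'[OF this]
  have "(\<integral>\<^sup>+\<omega>. (\<integral>\<^sup>+s\<in>{0<..t}. (\<integral>\<^sup>+r\<in>{0<..t - s}. H \<omega> s r \<partial>lborel) \<partial>lborel) \<partial>M)
      = (\<integral>\<^sup>+s. (\<integral>\<^sup>+\<omega>. (\<integral>\<^sup>+r\<in>{0<..t - s}. H \<omega> s r \<partial>lborel) * indicator {0<..t} s \<partial>M) \<partial>lborel)"
    by (rule Fubini_s[symmetric])
  also have "\<dots> = (\<integral>\<^sup>+s\<in>{0<..t}. (\<integral>\<^sup>+\<omega>. (\<integral>\<^sup>+r\<in>{0<..t - s}. H \<omega> s r \<partial>lborel) \<partial>M) \<partial>lborel)"
    by (intro nn_integral_cong nn_integral_multc) measurable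
  also have "\<dots> = (\<integral>\<^sup>+s\<in>{0<..t}. (\<integral>\<^sup>+r. (\<integral>\<^sup>+\<omega>. H \<omega> s r * indicator {0<..t - s} r \<partial>M) \<partial>lborel) \<partial>lborel)"
    by (intro nn_integral_cong arg_cong2[where f = "(*)"] Fubini_r[symmetric] refl)
  also have "\<dots> = (\<integral>\<^sup>+s\<in>{0<..t}. (\<integral>\<^sup>+r\<in>{0<..t - s}. (\<integral>\<^sup>+\<omega>. H \<omega> s r \<partial>M) \<partial>lborel) \<partial>lborel)"
    by (intro nn_integral_cong arg_cong2[where f = "(*)"] nn_integral_multc refl) measurable
  finally show ?thesis .
qed

lemma measurable_pred_greaterThanAtMost [measurable (raw)]:
  fixes h l u :: "'a \<Rightarrow> real"
  assumes [measurable]: "h \<in> borel_measurable N" "l \<in> borel_measurable N" "u \<in> borel_measurable N"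
  shows "Measurable.pred N (\<lambda>x. h x \<in> {l x<..u x})"
  unfolding greaterThanAtMost_iff by measurable

lemma measurable_case_prod_compose:
  fixes g :: "'b::second_countable_topology \<Rightarrow> 'c::second_countable_topology \<Rightarrow> real"
  assumes g: "(\<lambda>(x, y). g x y) \<in> borel_measurable borel"
    and [measurable]: "f \<in> borel_measurable N" "h \<in> borel_measurable N"
  shows "(\<lambda>\<omega>. g (f \<omega>) (h \<omega>)) \<in> borel_measurable N"
proof -
  have "(\<lambda>\<omega>. (f \<omega>, h \<omega>)) \<in> measurable N borel"
    unfolding borel_prod[symmetric] by measurable
  from measurable_compose[OF this g] show ?thesis
    by simp
qed

lemma tendsto_floor_mult_div:
  fixes m :: real
  assumes "0 \<le> m"
  shows "(\<lambda>n. real (nat \<lfloor>real (Suc n) * m\<rfloor>) / real (Suc n)) \<longlonglongrightarrow> m"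
proof (rule tendsto_sandwich[where f = "\<lambda>n. m - 1 / real (Suc n)" and h = "\<lambda>n. m"])
  show "(\<lambda>n. m - 1 / real (Suc n)) \<longlonglongrightarrow> m"
    using tendsto_diff[OF tendsto_const LIMSEQ_Suc[OF lim_const_over_n], of m 1] by simp
  have floor: "real (nat \<lfloor>real (Suc n) * m\<rfloor>) = real_of_int \<lfloor>real (Suc n) * m\<rfloor>" for n
    using assms by simp
  have lower: "m - 1 / real (Suc n) \<le> real_of_int \<lfloor>real (Suc n) * m\<rfloor> / real (Suc n)" for n
  proof -
    have "m - 1 / real (Suc n) = (real (Suc n) * m - 1) / real (Suc n)"
      by (simp add: field_simps)
    also have "\<dots> \<le> real_of_int \<lfloor>real (Suc n) * m\<rfloor> / real (Suc n)"
      by (intro divide_right_mono) linarith+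
    finally show ?thesis .
  qed
  have upper: "real_of_int \<lfloor>real (Suc n) * m\<rfloor> / real (Suc n) \<le> m" for n
    using divide_right_mono[OF of_int_floor_le[of "real (Suc n) * m"], of "real (Suc n)"] by simp
  show "\<forall>\<^sub>F n in sequentially. m - 1 / real (Suc n) \<le> real (nat \<lfloor>real (Suc n) * m\<rfloor>) / real (Suc n)"
    "\<forall>\<^sub>F n in sequentially. real (nat \<lfloor>real (Suc n) * m\<rfloor>) / real (Suc n) \<le> m"
    unfolding floor using lower upper by (auto intro: always_eventually)
qed simp

lemma measurable_continuous_process:
  fixes W :: "real \<Rightarrow> 'a \<Rightarrow> 'b::{metric_space, second_countable_topology}"
  assumes meas: "\<And>t. W t \<in> borel_measurable M"
    and cont: "\<And>\<omega>. \<omega> \<in> space M \<Longrightarrow> continuous_on {0..} (\<lambda>s. W s \<omega>)"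
    and f: "f \<in> borel_measurable N" and h: "h \<in> measurable N M"
  shows "(\<lambda>x. W (max 0 (f x)) (h x)) \<in> borel_measurable N"
proof -
  have process: "(\<lambda>p. W (max 0 (fst p)) (snd p)) \<in> borel_measurable ((lborel :: real measure) \<Otimes>\<^sub>M M)"
  proof (rule borel_measurable_LIMSEQ_metric)
    fix n :: nat
    show "(\<lambda>p. W (real (nat \<lfloor>real (Suc n) * max 0 (fst p)\<rfloor>) / real (Suc n)) (snd p))
        \<in> borel_measurable ((lborel :: real measure) \<Otimes>\<^sub>M M)"
    proof (rule measurable_compose_countable'[where f = "\<lambda>i p. W (real i / real (Suc n)) (snd p)"
          and I = UNIV])
      show "(\<lambda>p. W (real i / real (Suc n)) (snd p)) \<in> borel_measurable ((lborel :: real measure) \<Otimes>\<^sub>M M)" for i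
        using meas by measurable
      show "(\<lambda>p. nat \<lfloor>real (Suc n) * max 0 (fst p)\<rfloor>) \<in> measurable ((lborel :: real measure) \<Otimes>\<^sub>M M) (count_space UNIV)"
        by measurable
    qed auto
  next
    fix p assume "p \<in> space ((lborel :: real measure) \<Otimes>\<^sub>M M)"
    then have "snd p \<in> space M"
      by (auto simp: space_pair_measure)
    then show "(\<lambda>n. W (real (nat \<lfloor>real (Suc n) * max 0 (fst p)\<rfloor>) / real (Suc n)) (snd p))
        \<longlonglongrightarrow> W (max 0 (fst p)) (snd p)"
      using continuous_on_tendsto_compose[OF cont tendsto_floor_mult_div[of "max 0 (fst p)"]]
      by (simp add: o_def)
  qed
  have "(\<lambda>x. (f x, h x)) \<in> measurable N ((lborel :: real measure) \<Otimes>\<^sub>M M)"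
    using f h by (intro measurable_Pair) auto
  from measurable_compose[OF this process] show ?thesis
    by simp
qed

lemma (in prob_space) indep_var_of_indep_vars:
  assumes indep: "indep_vars M' X I" and "i \<in> I" "j \<in> I" "i \<noteq> j"
  shows "indep_var (M' i) (X i) (M' j) (X j)"
proof -
  have "indep_var (PiM {i} M') (\<lambda>\<omega>. restrict (\<lambda>k. X k \<omega>) {i}) (PiM {j} M') (\<lambda>\<omega>. restrict (\<lambda>k. X k \<omega>) {j})"
    using assms by (intro indep_var_restrict[OF indep]) auto
  then have "indep_var (M' i) ((\<lambda>f. f i) \<circ> (\<lambda>\<omega>. restrict (\<lambda>k. X k \<omega>) {i}))
      (M' j) ((\<lambda>f. f j) \<circ> (\<lambda>\<omega>. restrict (\<lambda>k. X k \<omega>) {j}))"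
    by (rule indep_var_compose) (auto intro: measurable_component_singleton)
  then show ?thesis
    by (simp add: o_def cong: restrict_cong)
qed

section \<open>Young's inequality in expectation\<close>

lemma borel_measurable_exp_enn [measurable]: "exp_enn \<in> borel_measurable borel"
  unfolding exp_enn_def[abs_def] by measurable

lemma exp_enn_ennreal: "0 \<le> x \<Longrightarrow> exp_enn (ennreal x) = ennreal (exp x)"
  by (simp add: exp_enn_def)

lemma ennreal_exp_le_exp_enn:
  assumes "ennreal x \<le> X"
  shows "ennreal (exp x) \<le> exp_enn X"
proof (cases X)
  case (real v)
  with assms have "x \<le> v"
    by (cases "0 \<le> x") (auto simp: ennreal_le_iff)
  with real show ?thesis
    by (simp add: exp_enn_def)
qed (simp add: exp_enn_def)

lemma conjugate_exponent:
  fixes p q :: real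
  assumes "1 < p" and "q = p / (p - 1)"
  shows "1 < q" and "1 / p + 1 / q = 1"
proof -
  show "1 < q"
    using assms by (simp add: less_divide_eq)
  have "1 / q = (p - 1) / p"
    using assms by simp
  then show "1 / p + 1 / q = 1"
    using assms by (simp add: add_divide_distrib[symmetric])
qed

lemma Youngs_inequality_exp_enn:
  fixes p q A l :: real
  assumes p: "1 < p" and q: "q = p / (p - 1)" and A: "0 \<le> A" and l: "0 < l"
  shows "ennreal A * exp_enn X
    \<le> ennreal (l powr p / p) * ennreal (A powr p) + ennreal (1 / (q * l powr q)) * exp_enn (ennreal q * X)"
proof (cases X)
  case (real x)
  have q0: "0 < q" and pq: "1 < q" "1 / p + 1 / q = 1"
    using conjugate_exponent[OF p q] by auto
  have "A * exp x = (l * A) * (exp x / l)"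
    using l by simp
  also have "\<dots> \<le> (l * A) powr p / p + (exp x / l) powr q / q"
    using Youngs_inequality[OF p pq, of "l * A" "exp x / l"] l A by simp
  also have "(l * A) powr p = l powr p * A powr p"
    using l A by (simp add: powr_mult)
  also have "(exp x / l) powr q = exp (q * x) / l powr q"
    using l by (simp add: powr_def ln_div exp_diff algebra_simps)
  also have "l powr p * A powr p / p + exp (q * x) / l powr q / q
      = l powr p / p * A powr p + 1 / (q * l powr q) * exp (q * x)"
    by simp
  finally show ?thesis
    using real p q0 l A
    by (simp add: exp_enn_ennreal ennreal_mult[symmetric] ennreal_plus[symmetric] ennreal_leI
             del: ennreal_plus)
next
  case top
  have "0 < q"
    using conjugate_exponent[OF p q] by auto
  with top l show ?thesis
    by (cases "A = 0") (auto simp: exp_enn_def ennreal_mult_top ennreal_mult_eq_top_iff)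
qed

lemma Youngs_weight_le:
  fixes p q a c l :: real
  assumes p: "1 < p" and q: "q = p / (p - 1)" and a: "0 < a" and c: "1 \<le> c"
    and l: "l = a powr (- 1 / (p * q))"
  shows "l powr p / p * a + 1 / (q * l powr q) * c \<le> c * a powr (1 / p)"
proof -
  have q0: "0 < q" and pq: "1 / p + 1 / q = 1"
    using conjugate_exponent[OF p q] by auto
  have lp: "l powr p = a powr (- 1 / q)" and lq: "l powr q = a powr (- 1 / p)"
    using a p q0 by (auto simp: l powr_powr)
  have "1 / p = - 1 / q + 1"
    using pq by simp
  then have "a powr (- 1 / q) * a = a powr (1 / p)"
    using a powr_add[of a "- 1 / q" 1] by simp
  then have "l powr p / p * a = a powr (1 / p) / p"
    by (simp add: lp)
  moreover have "1 / (q * l powr q) * c = a powr (1 / p) * c / q"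
    using a by (simp add: lq powr_minus_divide)
  ultimately have "l powr p / p * a + 1 / (q * l powr q) * c = a powr (1 / p) * (1 / p + c / q)"
    by (simp add: distrib_left)
  also have "\<dots> \<le> a powr (1 / p) * (c / p + c / q)"
    using c p by (simp add: divide_right_mono mult_left_mono)
  also have "\<dots> = a powr (1 / p) * (c * (1 / p + 1 / q))"
    by (simp add: distrib_left)
  also have "\<dots> = c * a powr (1 / p)"
    using pq by simp
  finally show ?thesis .
qed

lemma nn_integral_mult_exp_enn_le:
  fixes A :: "'a \<Rightarrow> real" and X :: "'a \<Rightarrow> ennreal" and p q a c :: real
  assumes p: "1 < p" and q: "q = p / (p - 1)"
    and [measurable]: "A \<in> borel_measurable M" "X \<in> borel_measurable M"
    and A_nonneg: "\<And>\<omega>. 0 \<le> A \<omega>"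
    and moment: "(\<integral>\<^sup>+\<omega>. ennreal (A \<omega> powr p) \<partial>M) \<le> ennreal a"
    and exp_moment: "(\<integral>\<^sup>+\<omega>. exp_enn (ennreal q * X \<omega>) \<partial>M) \<le> ennreal c" and c: "1 \<le> c"
  shows "(\<integral>\<^sup>+\<omega>. ennreal (A \<omega>) * exp_enn (X \<omega>) \<partial>M) \<le> ennreal (c * a powr (1 / p))"
proof (cases "0 < a")
  case False
  then have "(\<integral>\<^sup>+\<omega>. ennreal (A \<omega> powr p) \<partial>M) = 0"
    using moment ennreal_neg[of a] by simp
  then have "AE \<omega> in M. A \<omega> = 0"
    by (subst (asm) nn_integral_0_iff_AE) auto
  then have "(\<integral>\<^sup>+\<omega>. ennreal (A \<omega>) * exp_enn (X \<omega>) \<partial>M) = 0"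
    by (subst nn_integral_0_iff_AE) (auto elim: AE_mp)
  then show ?thesis
    by simp
next
  case a: True
  have q0: "0 < q"
    using conjugate_exponent[OF p q] by auto
  define l where "l = a powr (- 1 / (p * q))"
  have l0: "0 < l"
    using a by (simp add: l_def)
  have "(\<integral>\<^sup>+\<omega>. ennreal (A \<omega>) * exp_enn (X \<omega>) \<partial>M)
      \<le> (\<integral>\<^sup>+\<omega>. ennreal (l powr p / p) * ennreal (A \<omega> powr p)
            + ennreal (1 / (q * l powr q)) * exp_enn (ennreal q * X \<omega>) \<partial>M)"
    by (intro nn_integral_mono Youngs_inequality_exp_enn[OF p q A_nonneg l0])
  also have "\<dots> = ennreal (l powr p / p) * (\<integral>\<^sup>+\<omega>. ennreal (A \<omega> powr p) \<partial>M)
      + ennreal (1 / (q * l powr q)) * (\<integral>\<^sup>+\<omega>. exp_enn (ennreal q * X \<omega>) \<partial>M)"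
    by (simp add: nn_integral_add nn_integral_cmult)
  also have "\<dots> \<le> ennreal (l powr p / p) * ennreal a + ennreal (1 / (q * l powr q)) * ennreal c"
    by (intro add_mono mult_left_mono moment exp_moment) auto
  also have "\<dots> = ennreal (l powr p / p * a + 1 / (q * l powr q) * c)"
    using p q0 l0 a c by (simp add: ennreal_mult[symmetric] ennreal_plus[symmetric] del: ennreal_plus)
  also have "\<dots> \<le> ennreal (c * a powr (1 / p))"
    using Youngs_weight_le[OF p q a c l_def] by (rule ennreal_leI)
  finally show ?thesis .
qed

lemma powr_le_mult_of_le:
  fixes v \<Phi> P p :: real
  assumes v: "0 \<le> v" "v \<le> \<Phi> * P" and P: "0 \<le> P" "P \<le> 1" and p: "1 \<le> p"
  shows "v powr p \<le> \<Phi> powr p * P"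
proof (cases "P = 0")
  case False
  with v P have "0 \<le> \<Phi>"
    by (metis linorder_not_le mult_neg_pos order.strict_trans2 order_neq_le_trans)
  have "v powr p \<le> (\<Phi> * P) powr p"
    using v p by (simp add: powr_mono2)
  also have "\<dots> = \<Phi> powr p * P powr p"
    using \<open>0 \<le> \<Phi>\<close> P by (simp add: powr_mult)
  also have "\<dots> \<le> \<Phi> powr p * P"
    using False P p by (intro mult_left_mono powr_le_one_le) auto
  finally show ?thesis .
qed (use v in simp)

section \<open>The heat semigroup\<close>

lemma heat_kernel_nonneg: "0 \<le> heat_kernel t x y"
  by (simp add: heat_kernel_def)

lemma heat_kernel_0 [simp]: "heat_kernel 0 x y = 0"
  by (simp add: heat_kernel_def)

lemma heat_kernel_shift: "heat_kernel t x y = heat_kernel t 0 (y - x)"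
  by (simp add: heat_kernel_def)

lemma measurable_heat_kernel [measurable (raw)]:
  assumes [measurable]: "f \<in> borel_measurable N" "a \<in> borel_measurable N" "b \<in> borel_measurable N"
  shows "(\<lambda>\<omega>. heat_kernel (f \<omega>) (a \<omega> :: real^'d) (b \<omega>)) \<in> borel_measurable N"
  unfolding heat_kernel_def by measurable

definition heat_semigroup :: "real \<Rightarrow> (real^'d \<Rightarrow> ennreal) \<Rightarrow> real^'d \<Rightarrow> ennreal" where
  "heat_semigroup t F x = (\<integral>\<^sup>+y. ennreal (heat_kernel t x y) * F y \<partial>lborel)"

lemma measurable_heat_semigroup [measurable (raw)]:
  assumes [measurable]: "F \<in> borel_measurable borel" "f \<in> borel_measurable N" "a \<in> borel_measurable N"
  shows "(\<lambda>\<omega>. heat_semigroup (f \<omega>) F (a \<omega>)) \<in> borel_measurable N"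
  unfolding heat_semigroup_def by measurable

lemma heat_semigroup_0 [simp]: "heat_semigroup 0 F x = 0"
  by (simp add: heat_semigroup_def)

lemma heat_semigroup_mono: "(\<And>y. F y \<le> G y) \<Longrightarrow> heat_semigroup t F x \<le> heat_semigroup t G x"
  unfolding heat_semigroup_def by (intro nn_integral_mono mult_left_mono) auto

lemma heat_semigroup_cmult:
  "F \<in> borel_measurable borel \<Longrightarrow> heat_semigroup t (\<lambda>y. c * F y) x = c * heat_semigroup t F x"
  unfolding heat_semigroup_def
  by (subst nn_integral_cmult[symmetric]) (auto simp: ac_simps)

lemma ennreal_le_mult_indicator:
  fixes v c :: real
  assumes "v \<le> c * indicator A y"
  shows "ennreal v \<le> ennreal c * indicator A y"
  using assms by (cases "y \<in> A") (simp_all add: ennreal_leI ennreal_eq_0_iff)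

lemma heat_semigroup_le_cmult:
  assumes "\<And>y. F y \<le> c * G y" and "G \<in> borel_measurable borel"
  shows "heat_semigroup t F x \<le> c * heat_semigroup t G x"
  using heat_semigroup_mono[of F "\<lambda>y. c * G y" t x] assms by (simp add: heat_semigroup_cmult)

lemma heat_semigroup_centered:
  assumes [measurable]: "F \<in> borel_measurable borel"
  shows "heat_semigroup t F x = (\<integral>\<^sup>+y. ennreal (heat_kernel t 0 y) * F (x + y) \<partial>lborel)"
  unfolding heat_semigroup_def
  by (subst nn_integral_lborel_translate[where c = x]) (auto simp: heat_kernel_shift[of t x])

lemma Qop_nonneg: "(\<And>y. 0 \<le> \<phi> y) \<Longrightarrow> 0 \<le> Qop t \<phi> x"
  unfolding Qop_def set_lebesgue_integral_def
  by (intro Bochner_Integration.integral_nonneg scaleR_nonneg_nonneg mult_nonneg_nonneg heat_kernel_nonneg)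
     auto

lemma ennreal_Qop_le:
  "ennreal (Qop t \<phi> x) \<le> (\<integral>\<^sup>+r\<in>{0<..t}. heat_semigroup r (\<lambda>y. ennreal (\<phi> y)) x \<partial>lborel)"
proof -
  have "ennreal (Qop t \<phi> x) \<le> (\<integral>\<^sup>+r\<in>{0..t}. ennreal (LINT y|lborel. heat_kernel r x y * \<phi> y) \<partial>lborel)"
    unfolding Qop_def by (rule ennreal_set_integral_le_nn_integral)
  also have "\<dots> \<le> (\<integral>\<^sup>+r\<in>{0..t}. heat_semigroup r (\<lambda>y. ennreal (\<phi> y)) x \<partial>lborel)"
    unfolding heat_semigroup_def
    by (intro nn_integral_mono mult_right_mono order.trans[OF ennreal_integral_le_nn_integral])
       (simp_all add: ennreal_mult' heat_kernel_nonneg)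
  also have "\<dots> = (\<integral>\<^sup>+r\<in>{0<..t}. heat_semigroup r (\<lambda>y. ennreal (\<phi> y)) x \<partial>lborel)"
    by (intro nn_integral_cong) (auto simp: indicator_def)
  finally show ?thesis .
qed

lemma ennreal_set_integral_Qop_le:
  fixes b b' :: "real \<Rightarrow> real^'d" and G :: "real \<Rightarrow> real" and \<phi> :: "real^'d \<Rightarrow> real"
  assumes [measurable]: "\<phi> \<in> borel_measurable borel" and \<phi>_nonneg: "\<And>y. 0 \<le> \<phi> y"
    and G: "\<And>s. s \<in> {0..t} \<Longrightarrow> ennreal (G s) \<le> X"
  defines "P\<phi> \<equiv> \<lambda>r. heat_semigroup r (\<lambda>y. ennreal (\<phi> y))"
  shows "ennreal (LINT s:{0..t}|lborel.
      (\<phi> (b s) * Qop (t - s) \<phi> (b' s) + \<phi> (b' s) * Qop (t - s) \<phi> (b s)) * exp (G s))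
    \<le> (\<integral>\<^sup>+s\<in>{0<..t}. (\<integral>\<^sup>+r\<in>{0<..t - s}.
      (ennreal (\<phi> (b s)) * P\<phi> r (b' s) + ennreal (\<phi> (b' s)) * P\<phi> r (b s)) * exp_enn X \<partial>lborel) \<partial>lborel)"
    (is "ennreal (LINT s:{0..t}|lborel. ?F s) \<le> (\<integral>\<^sup>+s\<in>{0<..t}. ?I s \<partial>lborel)")
proof -
  have pointwise: "ennreal (?F s) \<le> ?I s" if "s \<in> {0..t}" for s
  proof -
    have "ennreal (?F s) = (ennreal (\<phi> (b s)) * ennreal (Qop (t - s) \<phi> (b' s))
        + ennreal (\<phi> (b' s)) * ennreal (Qop (t - s) \<phi> (b s))) * ennreal (exp (G s))"
      using \<phi>_nonneg Qop_nonneg[of \<phi>, OF \<phi>_nonneg]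
      by (simp add: ennreal_mult ennreal_plus)
    also have "\<dots> \<le> (ennreal (\<phi> (b s)) * (\<integral>\<^sup>+r\<in>{0<..t - s}. P\<phi> r (b' s) \<partial>lborel)
        + ennreal (\<phi> (b' s)) * (\<integral>\<^sup>+r\<in>{0<..t - s}. P\<phi> r (b s) \<partial>lborel)) * exp_enn X"
      unfolding P\<phi>_def
      by (intro mult_mono add_mono mult_left_mono ennreal_Qop_le ennreal_exp_le_exp_enn G that) auto
    also have "\<dots> = ?I s"
      unfolding P\<phi>_def
      by (simp add: nn_integral_add nn_integral_cmult nn_integral_multc algebra_simps)
    finally show ?thesis .
  qed
  have "ennreal (LINT s:{0..t}|lborel. ?F s) \<le> (\<integral>\<^sup>+s\<in>{0..t}. ennreal (?F s) \<partial>lborel)"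
    by (rule ennreal_set_integral_le_nn_integral)
  also have "\<dots> = (\<integral>\<^sup>+s\<in>{0<..t}. ennreal (?F s) \<partial>lborel)"
    using AE_lborel_singleton[of 0]
    by (intro nn_integral_cong_AE) (auto elim!: AE_mp simp: indicator_def)
  also have "\<dots> \<le> (\<integral>\<^sup>+s\<in>{0<..t}. ?I s \<partial>lborel)"
    using pointwise by (intro nn_integral_mono) (auto simp: indicator_def)
  finally show ?thesis .
qed

definition Qtilde_integrand :: "real \<Rightarrow> real \<Rightarrow> real \<Rightarrow> real^'d \<Rightarrow> real" where
  "Qtilde_integrand K p s x = enn2real (heat_semigroup s (indicator {z. norm z \<le> K}) x) powr (1 / p)"

lemma measurable_Qtilde_integrand [measurable (raw)]:
  assumes [measurable]: "f \<in> borel_measurable N" "a \<in> borel_measurable N"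
  shows "(\<lambda>\<omega>. Qtilde_integrand K p (f \<omega>) (a \<omega>)) \<in> borel_measurable N"
  unfolding Qtilde_integrand_def by measurable

lemma Qtilde_eq_integral_Qtilde_integrand:
  "Qtilde K p t x = (LINT s:{0..t}|lborel. Qtilde_integrand K p s x)"
proof -
  have "(LINT z:{z. norm z \<le> K}|lborel. heat_kernel s x z)
      = enn2real (heat_semigroup s (indicator {z. norm z \<le> K}) x)" for s
    unfolding set_lebesgue_integral_def heat_semigroup_def
    by (subst integral_eq_nn_integral)
       (auto simp: heat_kernel_nonneg indicator_def intro!: arg_cong[where f = enn2real] nn_integral_cong)
  then show ?thesis
    by (simp add: Qtilde_def Qtilde_integrand_def)
qed

lemma Qtilde_nonneg: "0 \<le> Qtilde K p t x"
  unfolding Qtilde_eq_integral_Qtilde_integrand set_lebesgue_integral_def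
  by (intro Bochner_Integration.integral_nonneg) (simp add: Qtilde_integrand_def)

section \<open>A pair of independent Brownian motions\<close>

locale BM_pair =
  fixes M :: "'a measure" and W W' :: "real \<Rightarrow> 'a \<Rightarrow> real^'d"
  assumes BM: "indep_std_BM_pair M W W'"
begin

sublocale prob_space M
  using BM by (simp add: indep_std_BM_pair_def)

lemma measurable_W [measurable]: "W t \<in> borel_measurable M" "W' t \<in> borel_measurable M"
  using BM by (auto simp: indep_std_BM_pair_def)

lemma W_0: "\<omega> \<in> space M \<Longrightarrow> W 0 \<omega> = 0" "\<omega> \<in> space M \<Longrightarrow> W' 0 \<omega> = 0"
  using BM by (auto simp: indep_std_BM_pair_def)

lemma continuous_W:
  "\<omega> \<in> space M \<Longrightarrow> continuous_on {0..} (\<lambda>s. W s \<omega>)"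
  "\<omega> \<in> space M \<Longrightarrow> continuous_on {0..} (\<lambda>s. W' s \<omega>)"
  using BM by (auto simp: indep_std_BM_pair_def)

lemma measurable_W_path [measurable (raw)]:
  assumes "f \<in> borel_measurable N" "h \<in> measurable N M"
  shows "(\<lambda>x. W (max 0 (f x)) (h x)) \<in> borel_measurable N"
    and "(\<lambda>x. W' (max 0 (f x)) (h x)) \<in> borel_measurable N"
  using measurable_continuous_process[OF measurable_W(1) continuous_W(1) assms]
    measurable_continuous_process[OF measurable_W(2) continuous_W(2) assms] by auto

definition increment :: "(nat \<Rightarrow> real) \<Rightarrow> nat \<Rightarrow> bool \<Rightarrow> 'a \<Rightarrow> real^'d" where
  "increment ts i b \<omega> =
     (if b then W (ts (Suc i)) \<omega> - W (ts i) \<omega> else W' (ts (Suc i)) \<omega> - W' (ts i) \<omega>)"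

lemma increments_indep_gaussian:
  assumes "0 \<le> ts 0" "\<forall>k<n. ts k < ts (Suc k)"
  shows "indep_vars (\<lambda>_. borel) (\<lambda>(k, a). increment ts k a) ({..<n} \<times> UNIV)"
    and "k < n \<Longrightarrow> distributed M lborel (increment ts k a) (\<lambda>u. ennreal (heat_kernel (ts (Suc k) - ts k) 0 u))"
proof -
  have eq: "(\<lambda>(k, a). increment ts k a) = (\<lambda>(k, a) \<omega>. if a then W (ts (Suc k)) \<omega> - W (ts k) \<omega>
      else W' (ts (Suc k)) \<omega> - W' (ts k) \<omega>)"
    by (auto simp: fun_eq_iff increment_def)
  show "indep_vars (\<lambda>_. borel) (\<lambda>(k, a). increment ts k a) ({..<n} \<times> UNIV)"
    unfolding eq using BM assms unfolding indep_std_BM_pair_def by blast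
  assume "k < n"
  then show "distributed M lborel (increment ts k a) (\<lambda>u. ennreal (heat_kernel (ts (Suc k) - ts k) 0 u))"
    using BM assms unfolding indep_std_BM_pair_def increment_def[abs_def]
    by (cases a) simp_all
qed

lemma distributed_increment_pair:
  assumes ts: "0 \<le> ts 0" "\<forall>k<n. ts k < ts (Suc k)"
    and ij: "i < n" "j < n" "(i, b) \<noteq> (j, c)"
  shows "distributed M (lborel \<Otimes>\<^sub>M lborel) (\<lambda>\<omega>. (increment ts i b \<omega>, increment ts j c \<omega>))
    (\<lambda>(u, v). ennreal (heat_kernel (ts (Suc i) - ts i) 0 u) * ennreal (heat_kernel (ts (Suc j) - ts j) 0 v))"
proof (intro distributed_joint_indep lborel.sigma_finite_measure_axioms)
  have "indep_var borel (increment ts i b) borel (increment ts j c)"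
    using indep_var_of_indep_vars[OF increments_indep_gaussian(1)[OF ts], of "(i, b)" "(j, c)"] ij
    by auto
  then show "indep_var lborel (increment ts i b) lborel (increment ts j c)"
    by (simp add: indep_var_eq)
qed (use increments_indep_gaussian(2)[OF ts] ij in auto)

lemma distributed_W:
  assumes "0 < s"
  shows "distributed M lborel (\<lambda>\<omega>. W s \<omega> - W 0 \<omega>) (\<lambda>u. ennreal (heat_kernel s 0 u))"
  using increments_indep_gaussian(2)[of "(!) [0, s]" 1 0 True] assms
  by (simp add: increment_def[abs_def])

lemma distributed_W_W':
  assumes "0 < s"
  shows "distributed M (lborel \<Otimes>\<^sub>M lborel) (\<lambda>\<omega>. (W s \<omega> - W 0 \<omega>, W' s \<omega> - W' 0 \<omega>))
    (\<lambda>(u, v). ennreal (heat_kernel s 0 u) * ennreal (heat_kernel s 0 v))"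
  using distributed_increment_pair[of "(!) [0, s]" 1 0 0 True False] assms
  by (simp add: increment_def[abs_def])

lemma distributed_W_increments:
  assumes "0 < s" "0 < r"
  shows "distributed M (lborel \<Otimes>\<^sub>M lborel) (\<lambda>\<omega>. (W s \<omega> - W 0 \<omega>, W (s + r) \<omega> - W s \<omega>))
    (\<lambda>(u, v). ennreal (heat_kernel s 0 u) * ennreal (heat_kernel r 0 v))"
  using distributed_increment_pair[of "(!) [0, s, s + r]" 2 0 1 True True] assms
  by (simp add: increment_def[abs_def] less_2_cases_iff)

lemma nn_integral_W:
  assumes "0 < s" and [measurable]: "F \<in> borel_measurable borel"
  shows "(\<integral>\<^sup>+\<omega>. F (x + W s \<omega>) \<partial>M) = heat_semigroup s F x"
proof -
  have "(\<integral>\<^sup>+\<omega>. F (x + W s \<omega>) \<partial>M) = (\<integral>\<^sup>+\<omega>. F (x + (W s \<omega> - W 0 \<omega>)) \<partial>M)"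
    by (intro nn_integral_cong) (simp add: W_0)
  also have "\<dots> = (\<integral>\<^sup>+u. ennreal (heat_kernel s 0 u) * F (x + u) \<partial>lborel)"
    by (subst distributed_nn_integral[OF distributed_W[OF \<open>0 < s\<close>]]) auto
  also have "\<dots> = heat_semigroup s F x"
    by (simp add: heat_semigroup_centered)
  finally show ?thesis .
qed

lemma heat_kernel_integral:
  fixes x :: "real^'d"
  assumes "0 < s"
  shows "(\<integral>\<^sup>+y. ennreal (heat_kernel s x y) \<partial>lborel) = 1"
  using nn_integral_W[OF assms, of "\<lambda>_. 1" x] by (simp add: heat_semigroup_def emeasure_space_1)

lemma heat_semigroup_le_1:
  fixes x :: "real^'d"
  assumes "\<And>y. F y \<le> 1" and "0 \<le> s"
  shows "heat_semigroup s F x \<le> 1"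
proof (cases "s = 0")
  case False
  have "heat_semigroup s F x \<le> (\<integral>\<^sup>+y. ennreal (heat_kernel s x y) \<partial>lborel)"
    unfolding heat_semigroup_def using assms(1) by (intro nn_integral_mono) (simp add: mult_left_le)
  also have "\<dots> = 1"
    using False assms(2) by (intro heat_kernel_integral) simp
  finally show ?thesis .
qed simp

lemma heat_semigroup_indicator_le_1:
  fixes x :: "real^'d"
  shows "0 \<le> t \<Longrightarrow> heat_semigroup t (indicator A) x \<le> 1"
  by (rule heat_semigroup_le_1) (auto simp: indicator_def)

lemma heat_semigroup_add:
  fixes x :: "real^'d"
  assumes "0 < s" "0 < r" and [measurable]: "F \<in> borel_measurable borel"
  shows "heat_semigroup s (heat_semigroup r F) x = heat_semigroup (s + r) F x"
proof -
  \<comment> \<open>Chapman-Kolmogorov, read off from the independent increments of \<open>W\<close> over \<open>[0, s]\<close> and \<open>[s, s + r]\<close>\<close>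
  have "heat_semigroup s (heat_semigroup r F) x
      = (\<integral>\<^sup>+u. \<integral>\<^sup>+v. ennreal (heat_kernel s 0 u) * (ennreal (heat_kernel r 0 v) * F (x + u + v)) \<partial>lborel \<partial>lborel)"
    by (simp add: heat_semigroup_centered nn_integral_cmult add.assoc)
  also have "\<dots> = (\<integral>\<^sup>+(u, v). ennreal (heat_kernel s 0 u) * ennreal (heat_kernel r 0 v)
      * F (x + u + v) \<partial>(lborel \<Otimes>\<^sub>M lborel))"
    by (subst lborel.nn_integral_fst[symmetric]) (auto simp: ac_simps)
  also have "\<dots> = (\<integral>\<^sup>+\<omega>. F (x + (W s \<omega> - W 0 \<omega>) + (W (s + r) \<omega> - W s \<omega>)) \<partial>M)"
    using distributed_nn_integral[OF distributed_W_increments[OF assms(1,2)], of "\<lambda>(u, v). F (x + u + v)"]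
    by (simp add: split_beta' add.assoc)
  also have "\<dots> = (\<integral>\<^sup>+\<omega>. F (x + W (s + r) \<omega>) \<partial>M)"
    by (intro nn_integral_cong) (simp add: W_0)
  also have "\<dots> = heat_semigroup (s + r) F x"
    using assms by (simp add: nn_integral_W)
  finally show ?thesis .
qed

lemma nn_integral_W_W':
  assumes "0 < s" and [measurable]: "F \<in> borel_measurable borel" "G \<in> borel_measurable borel"
  shows "(\<integral>\<^sup>+\<omega>. F (x + W s \<omega>) * G (y + W' s \<omega>) \<partial>M) = heat_semigroup s F x * heat_semigroup s G y"
proof -
  have "(\<integral>\<^sup>+\<omega>. F (x + W s \<omega>) * G (y + W' s \<omega>) \<partial>M)
      = (\<integral>\<^sup>+\<omega>. F (x + (W s \<omega> - W 0 \<omega>)) * G (y + (W' s \<omega> - W' 0 \<omega>)) \<partial>M)"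
    by (intro nn_integral_cong) (simp add: W_0)
  also have "\<dots> = (\<integral>\<^sup>+(u, v). ennreal (heat_kernel s 0 u) * ennreal (heat_kernel s 0 v)
      * (F (x + u) * G (y + v)) \<partial>(lborel \<Otimes>\<^sub>M lborel))"
    using distributed_nn_integral[OF distributed_W_W'[OF assms(1)], of "\<lambda>(u, v). F (x + u) * G (y + v)"]
    by (simp add: split_beta')
  also have "\<dots> = (\<integral>\<^sup>+u. \<integral>\<^sup>+v. (ennreal (heat_kernel s 0 u) * F (x + u)) * (ennreal (heat_kernel s 0 v) * G (y + v)) \<partial>lborel \<partial>lborel)"
    by (subst lborel.nn_integral_fst[symmetric]) (auto simp: ac_simps)
  also have "\<dots> = heat_semigroup s F x * heat_semigroup s G y"
    by (simp add: heat_semigroup_centered nn_integral_cmult nn_integral_multc)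
  finally show ?thesis .
qed

lemma ennreal_Qtilde:
  fixes x :: "real^'d"
  assumes "0 \<le> t" "0 < p"
  shows "ennreal (Qtilde K p t x) = (\<integral>\<^sup>+s\<in>{0..t}. ennreal (Qtilde_integrand K p s x) \<partial>lborel)"
proof -
  have "Qtilde_integrand K p s x \<le> 1" if "0 \<le> s" for s
    unfolding Qtilde_integrand_def using heat_semigroup_le_1[OF _ that, of "indicator {z. norm z \<le> K}" x] assms
    by (intro powr_le1) (auto simp: enn2real_leI indicator_def)
  then have "(\<integral>\<^sup>+s\<in>{0..t}. ennreal (Qtilde_integrand K p s x) \<partial>lborel) \<le> (\<integral>\<^sup>+s\<in>{0..t}. 1 \<partial>lborel)"
    by (intro nn_integral_mono) (auto simp: indicator_def)
  then have finite: "(\<integral>\<^sup>+s. ennreal (indicator {0..t} s * Qtilde_integrand K p s x) \<partial>lborel) < \<infinity>"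
    using assms by (simp add: indicator_mult_ennreal mult.commute le_less_trans)
  show ?thesis
    unfolding Qtilde_eq_integral_Qtilde_integrand set_lebesgue_integral_def
    using finite
    by (subst integral_eq_nn_integral)
       (auto simp: Qtilde_integrand_def indicator_mult_ennreal mult.commute less_top)
qed

(* The hypothesis product encodes that Z and Z' are independent with laws p_s(z, .) and p_s(z', .). *)
lemma nn_integral_powr_phi_heat_semigroup_le:
  fixes Z Z' :: "'a \<Rightarrow> real^'d" and \<phi> :: "real^'d \<Rightarrow> real"
  assumes s: "0 < s" and r: "0 < r" and p: "1 \<le> p"
    and [measurable]: "Z \<in> borel_measurable M" "Z' \<in> borel_measurable M" "\<phi> \<in> borel_measurable borel"
    and product: "\<And>F G. F \<in> borel_measurable borel \<Longrightarrow> G \<in> borel_measurable borel \<Longrightarrow>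
      (\<integral>\<^sup>+\<omega>. F (Z \<omega>) * G (Z' \<omega>) \<partial>M) = heat_semigroup s F z * heat_semigroup s G z'"
    and \<phi>_nonneg: "\<And>y. 0 \<le> \<phi> y" and \<phi>_le: "\<And>y. \<phi> y \<le> \<Phi> * indicator {y. norm y \<le> K} y"
    and \<Phi>: "0 \<le> \<Phi>"
  defines "ball_K \<equiv> indicator {y. norm y \<le> K} :: real^'d \<Rightarrow> ennreal"
  shows "(\<integral>\<^sup>+\<omega>. ennreal ((\<phi> (Z \<omega>) * enn2real (heat_semigroup r (\<lambda>y. ennreal (\<phi> y)) (Z' \<omega>))) powr p) \<partial>M)
    \<le> ennreal (\<Phi> powr (2 * p) * enn2real (heat_semigroup s ball_K z) * enn2real (heat_semigroup (s + r) ball_K z'))"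
proof -
  have ball_K_finite: "heat_semigroup u ball_K y < \<top>" if "0 \<le> u" for u y
    using heat_semigroup_indicator_le_1[OF that, of "{y. norm y \<le> K}" y] unfolding ball_K_def
    by (rule order.strict_trans1[OF _ ennreal_one_less_top])
  have "ennreal (\<phi> y) \<le> ennreal \<Phi> * ball_K y" for y
    unfolding ball_K_def by (rule ennreal_le_mult_indicator[OF \<phi>_le])
  then have "enn2real (heat_semigroup r (\<lambda>y. ennreal (\<phi> y)) y) \<le> enn2real (ennreal \<Phi> * heat_semigroup r ball_K y)" for y
    using ball_K_finite[of r y] r
    by (intro enn2real_mono heat_semigroup_le_cmult) (auto simp: ball_K_def ennreal_mult_less_top)
  then have P\<phi>: "enn2real (heat_semigroup r (\<lambda>y. ennreal (\<phi> y)) y) \<le> \<Phi> * enn2real (heat_semigroup r ball_K y)" for y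
    using \<Phi> by (simp add: enn2real_mult)
  have pointwise: "(\<phi> (Z \<omega>) * enn2real (heat_semigroup r (\<lambda>y. ennreal (\<phi> y)) (Z' \<omega>))) powr p
      \<le> \<Phi> powr p * enn2real (ball_K (Z \<omega>)) * (\<Phi> powr p * enn2real (heat_semigroup r ball_K (Z' \<omega>)))" for \<omega>
  proof -
    have "\<phi> (Z \<omega>) powr p \<le> \<Phi> powr p * enn2real (ball_K (Z \<omega>))"
      using \<phi>_le[of "Z \<omega>"] \<phi>_nonneg p by (intro powr_le_mult_of_le) (auto simp: ball_K_def indicator_def)
    moreover have "enn2real (heat_semigroup r (\<lambda>y. ennreal (\<phi> y)) (Z' \<omega>)) powr p
        \<le> \<Phi> powr p * enn2real (heat_semigroup r ball_K (Z' \<omega>))"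
      using P\<phi> enn2real_mono[OF heat_semigroup_indicator_le_1[of r]] r p
      by (intro powr_le_mult_of_le) (auto simp: ball_K_def)
    ultimately show ?thesis
      using \<phi>_nonneg by (simp add: powr_mult mult_mono)
  qed
  have "\<Phi> powr (2 * p) = \<Phi> powr p * \<Phi> powr p"
    by (metis mult_2 powr_add)
  then have \<Phi>_2p: "ennreal (\<Phi> powr (2 * p)) = ennreal (\<Phi> powr p) * ennreal (\<Phi> powr p)"
    by (simp add: ennreal_mult')
  have "(\<integral>\<^sup>+\<omega>. ennreal ((\<phi> (Z \<omega>) * enn2real (heat_semigroup r (\<lambda>y. ennreal (\<phi> y)) (Z' \<omega>))) powr p) \<partial>M)
      \<le> (\<integral>\<^sup>+\<omega>. ennreal (\<Phi> powr (2 * p)) * (ball_K (Z \<omega>) * heat_semigroup r ball_K (Z' \<omega>)) \<partial>M)"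
  proof (intro nn_integral_mono order.trans[OF ennreal_leI[OF pointwise]] eq_refl)
    show "ennreal (\<Phi> powr p * enn2real (ball_K (Z \<omega>)) * (\<Phi> powr p * enn2real (heat_semigroup r ball_K (Z' \<omega>))))
        = ennreal (\<Phi> powr (2 * p)) * (ball_K (Z \<omega>) * heat_semigroup r ball_K (Z' \<omega>))" for \<omega>
      using ball_K_finite[of r] r unfolding \<Phi>_2p
      by (simp add: ennreal_mult ennreal_enn2real less_top ball_K_def indicator_def ac_simps)
  qed
  also have "\<dots> = ennreal (\<Phi> powr (2 * p)) * (heat_semigroup s ball_K z * heat_semigroup s (heat_semigroup r ball_K) z')"
    by (simp add: nn_integral_cmult product ball_K_def)
  also have "\<dots> = ennreal (\<Phi> powr (2 * p) * enn2real (heat_semigroup s ball_K z) * enn2real (heat_semigroup (s + r) ball_K z'))"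
    using ball_K_finite[of s] ball_K_finite[of "s + r"] s r
    by (simp add: heat_semigroup_add ennreal_mult ennreal_enn2real less_top mult.assoc ball_K_def)
  finally show ?thesis .
qed

lemma nn_integral_phi_heat_semigroup_exp_le:
  fixes Z Z' :: "'a \<Rightarrow> real^'d" and X :: "'a \<Rightarrow> ennreal" and \<phi> :: "real^'d \<Rightarrow> real"
  assumes s: "0 < s" and r: "0 < r" and p: "1 < p"
    and [measurable]: "Z \<in> borel_measurable M" "Z' \<in> borel_measurable M" "X \<in> borel_measurable M"
      "\<phi> \<in> borel_measurable borel"
    and product: "\<And>F G. F \<in> borel_measurable borel \<Longrightarrow> G \<in> borel_measurable borel \<Longrightarrow>
      (\<integral>\<^sup>+\<omega>. F (Z \<omega>) * G (Z' \<omega>) \<partial>M) = heat_semigroup s F z * heat_semigroup s G z'"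
    and \<phi>_nonneg: "\<And>y. 0 \<le> \<phi> y" and \<phi>_le: "\<And>y. \<phi> y \<le> \<Phi> * indicator {y. norm y \<le> K} y"
    and \<Phi>: "0 \<le> \<Phi>"
    and exp_moment: "(\<integral>\<^sup>+\<omega>. exp_enn (ennreal (p / (p - 1)) * X \<omega>) \<partial>M) \<le> 2"
  shows "(\<integral>\<^sup>+\<omega>. ennreal (\<phi> (Z \<omega>)) * heat_semigroup r (\<lambda>y. ennreal (\<phi> y)) (Z' \<omega>) * exp_enn (X \<omega>) \<partial>M)
    \<le> ennreal (2 * \<Phi>\<^sup>2) * ennreal (Qtilde_integrand K p s z) * ennreal (Qtilde_integrand K p (s + r) z')"
proof -
  let ?P\<phi> = "heat_semigroup r (\<lambda>y. ennreal (\<phi> y))"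
  define A where "A \<omega> = \<phi> (Z \<omega>) * enn2real (?P\<phi> (Z' \<omega>))" for \<omega>
  define a where "a = \<Phi> powr (2 * p) * enn2real (heat_semigroup s (indicator {y. norm y \<le> K}) z)
    * enn2real (heat_semigroup (s + r) (indicator {y. norm y \<le> K}) z')"
  have "?P\<phi> y \<le> ennreal \<Phi> * heat_semigroup r (indicator {y. norm y \<le> K}) y" for y
    by (intro heat_semigroup_le_cmult ennreal_le_mult_indicator \<phi>_le) simp
  moreover have "heat_semigroup r (indicator {y. norm y \<le> K}) y < \<top>" for y :: "real^'d"
    using heat_semigroup_indicator_le_1[of r _ y] r by (auto intro: order.strict_trans1[OF _ ennreal_one_less_top])
  ultimately have P\<phi>_finite: "?P\<phi> y < \<top>" for y
    by (meson ennreal_less_top ennreal_mult_less_top order.strict_trans1)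
  have "(\<integral>\<^sup>+\<omega>. ennreal (\<phi> (Z \<omega>)) * ?P\<phi> (Z' \<omega>) * exp_enn (X \<omega>) \<partial>M)
      = (\<integral>\<^sup>+\<omega>. ennreal (A \<omega>) * exp_enn (X \<omega>) \<partial>M)"
    using P\<phi>_finite \<phi>_nonneg by (intro nn_integral_cong) (simp add: A_def ennreal_mult ennreal_enn2real)
  also have "\<dots> \<le> ennreal (2 * a powr (1 / p))"
  proof (rule nn_integral_mult_exp_enn_le[OF p refl])
    show "(\<integral>\<^sup>+\<omega>. exp_enn (ennreal (p / (p - 1)) * X \<omega>) \<partial>M) \<le> ennreal 2"
      using exp_moment by simp
    show "(\<integral>\<^sup>+\<omega>. ennreal (A \<omega> powr p) \<partial>M) \<le> ennreal a"
      unfolding A_def a_def using p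
      by (intro nn_integral_powr_phi_heat_semigroup_le[OF s r _ _ _ _ product \<phi>_nonneg \<phi>_le \<Phi>]) auto
  qed (auto simp: A_def \<phi>_nonneg)
  also have "2 * a powr (1 / p) = 2 * \<Phi>\<^sup>2 * Qtilde_integrand K p s z * Qtilde_integrand K p (s + r) z'"
  proof -
    have "(\<Phi> powr (2 * p)) powr (1 / p) = \<Phi>\<^sup>2"
      using p \<Phi> by (simp add: powr_powr)
    then show ?thesis
      by (simp add: a_def Qtilde_integrand_def powr_mult)
  qed
  finally show ?thesis
    using \<Phi> by (simp add: ennreal_mult Qtilde_integrand_def)
qed

definition total_interaction :: "(real^'d \<Rightarrow> real^'d \<Rightarrow> real) \<Rightarrow> real^'d \<Rightarrow> real^'d \<Rightarrow> 'a \<Rightarrow> ennreal" where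
  "total_interaction g x y \<omega> = (\<integral>\<^sup>+s\<in>{0..}. ennreal (g (x + W s \<omega>) (y + W' s \<omega>)) \<partial>lborel)"

lemma measurable_total_interaction:
  assumes g: "(\<lambda>(x, y). g x y) \<in> borel_measurable borel"
  shows "total_interaction g x y \<in> borel_measurable M"
proof -
  note measurable_case_prod_compose[OF g, measurable (raw)]
  have "total_interaction g x y
      = (\<lambda>\<omega>. \<integral>\<^sup>+s\<in>{0..}. ennreal (g (x + W (max 0 s) \<omega>) (y + W' (max 0 s) \<omega>)) \<partial>lborel)"
    unfolding total_interaction_def by (intro ext nn_integral_cong) (simp add: indicator_def)
  then show ?thesis
    by simp
qed

lemma Vphi_le_time_integral:
  fixes g :: "real^'d \<Rightarrow> real^'d \<Rightarrow> real" and \<phi> :: "real^'d \<Rightarrow> real" and x y :: "real^'d"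
  assumes g: "(\<lambda>(x, y). g x y) \<in> borel_measurable borel" and [measurable]: "\<phi> \<in> borel_measurable borel"
    and \<phi>_nonneg: "\<And>y. 0 \<le> \<phi> y"
  defines "P\<phi> \<equiv> \<lambda>r. heat_semigroup r (\<lambda>y. ennreal (\<phi> y))"
  shows "Vphi M W W' g \<phi> t x y \<le> (\<integral>\<^sup>+s\<in>{0<..t}. (\<integral>\<^sup>+r\<in>{0<..t - s}. (\<integral>\<^sup>+\<omega>.
      (ennreal (\<phi> (x + W s \<omega>)) * P\<phi> r (y + W' s \<omega>) + ennreal (\<phi> (y + W' s \<omega>)) * P\<phi> r (x + W s \<omega>))
      * exp_enn (total_interaction g x y \<omega>) \<partial>M) \<partial>lborel) \<partial>lborel)"
proof -
  note [measurable] = measurable_total_interaction[OF g]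
  \<comment> \<open>the paths are only known to be continuous on \<open>[0, \<infinity>)\<close>, hence \<open>max 0 s\<close> for joint measurability\<close>
  define H where "H \<omega> s r = (ennreal (\<phi> (x + W (max 0 s) \<omega>)) * P\<phi> r (y + W' (max 0 s) \<omega>)
      + ennreal (\<phi> (y + W' (max 0 s) \<omega>)) * P\<phi> r (x + W (max 0 s) \<omega>)) * exp_enn (total_interaction g x y \<omega>)"
    for \<omega> s r
  have "Vphi M W W' g \<phi> t x y \<le> (\<integral>\<^sup>+\<omega>. (\<integral>\<^sup>+s\<in>{0<..t}. (\<integral>\<^sup>+r\<in>{0<..t - s}. H \<omega> s r \<partial>lborel) \<partial>lborel) \<partial>M)"
    unfolding Vphi_def
  proof (intro nn_integral_mono)
    fix \<omega>
    have G: "ennreal (LINT u:{0..s}|lborel. g (x + W u \<omega>) (y + W' u \<omega>)) \<le> total_interaction g x y \<omega>" for s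
      unfolding total_interaction_def
      by (rule order.trans[OF ennreal_set_integral_le_nn_integral])
         (auto intro!: nn_integral_mono simp: indicator_def)
    show "ennreal (LINT s:{0..t}|lborel. (\<phi> (x + W s \<omega>) * Qop (t - s) \<phi> (y + W' s \<omega>)
        + \<phi> (y + W' s \<omega>) * Qop (t - s) \<phi> (x + W s \<omega>)) * exp (LINT u:{0..s}|lborel. g (x + W u \<omega>) (y + W' u \<omega>)))
      \<le> (\<integral>\<^sup>+s\<in>{0<..t}. (\<integral>\<^sup>+r\<in>{0<..t - s}. H \<omega> s r \<partial>lborel) \<partial>lborel)"
      unfolding H_def P\<phi>_def
      by (rule order.trans[OF ennreal_set_integral_Qop_le[where b = "\<lambda>s. x + W s \<omega>"
            and b' = "\<lambda>s. y + W' s \<omega>" and X = "total_interaction g x y \<omega>", OF _ \<phi>_nonneg G]])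
         (auto intro!: nn_integral_mono simp: indicator_def)
  qed
  also have "\<dots> = (\<integral>\<^sup>+s\<in>{0<..t}. (\<integral>\<^sup>+r\<in>{0<..t - s}. (\<integral>\<^sup>+\<omega>. H \<omega> s r \<partial>M) \<partial>lborel) \<partial>lborel)"
  proof (rule nn_integral_triangle_swap)
    show "(\<lambda>(\<omega>, r). H \<omega> s r) \<in> borel_measurable (M \<Otimes>\<^sub>M lborel)" for s
      unfolding H_def P\<phi>_def by measurable
    show "(\<lambda>(\<omega>, s). \<integral>\<^sup>+r\<in>{0<..t - s}. H \<omega> s r \<partial>lborel) \<in> borel_measurable (M \<Otimes>\<^sub>M lborel)"
      unfolding H_def P\<phi>_def by measurable
  qed
  also have "\<dots> = (\<integral>\<^sup>+s\<in>{0<..t}. (\<integral>\<^sup>+r\<in>{0<..t - s}. (\<integral>\<^sup>+\<omega>.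
      (ennreal (\<phi> (x + W s \<omega>)) * P\<phi> r (y + W' s \<omega>) + ennreal (\<phi> (y + W' s \<omega>)) * P\<phi> r (x + W s \<omega>))
      * exp_enn (total_interaction g x y \<omega>) \<partial>M) \<partial>lborel) \<partial>lborel)"
    by (intro nn_integral_cong) (simp add: H_def indicator_def)
  finally show ?thesis .
qed

lemma Vphi_le:
  fixes g :: "real^'d \<Rightarrow> real^'d \<Rightarrow> real" and \<phi> :: "real^'d \<Rightarrow> real" and x y :: "real^'d"
  assumes p: "1 < p" and t: "0 \<le> t"
    and g: "(\<lambda>(x, y). g x y) \<in> borel_measurable borel" and [measurable]: "\<phi> \<in> borel_measurable borel"
    and exp_moment: "(\<integral>\<^sup>+\<omega>. exp_enn (ennreal (p / (p - 1)) * total_interaction g x y \<omega>) \<partial>M) \<le> 2"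
    and \<phi>_nonneg: "\<And>y. 0 \<le> \<phi> y" and \<phi>_le: "\<And>y. \<phi> y \<le> \<Phi> * indicator {y. norm y \<le> K} y"
    and \<Phi>: "0 \<le> \<Phi>"
  shows "Vphi M W W' g \<phi> t x y \<le> ennreal (4 * \<Phi>\<^sup>2 * Qtilde K p t x * Qtilde K p t y)"
proof -
  note [measurable] = measurable_total_interaction[OF g]
  let ?P\<phi> = "\<lambda>r. heat_semigroup r (\<lambda>y. ennreal (\<phi> y))"
  let ?Q = "\<lambda>z u. ennreal (Qtilde_integrand K p u z)"
  define c where "c = ennreal (2 * \<Phi>\<^sup>2)"
  have expectation_le: "(\<integral>\<^sup>+\<omega>. (ennreal (\<phi> (x + W s \<omega>)) * ?P\<phi> r (y + W' s \<omega>)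
        + ennreal (\<phi> (y + W' s \<omega>)) * ?P\<phi> r (x + W s \<omega>)) * exp_enn (total_interaction g x y \<omega>) \<partial>M)
      \<le> c * ?Q x s * ?Q y (s + r) + c * ?Q y s * ?Q x (s + r)" if "0 < s" "0 < r" for s r
  proof -
    have product: "(\<integral>\<^sup>+\<omega>. F (x + W s \<omega>) * G (y + W' s \<omega>) \<partial>M) = heat_semigroup s F x * heat_semigroup s G y"
      "(\<integral>\<^sup>+\<omega>. G (y + W' s \<omega>) * F (x + W s \<omega>) \<partial>M) = heat_semigroup s G y * heat_semigroup s F x"
      if "F \<in> borel_measurable borel" "G \<in> borel_measurable borel" for F G
      using nn_integral_W_W'[OF \<open>0 < s\<close> that] by (simp_all add: mult.commute)
    show ?thesis
      unfolding distrib_right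
      by (subst nn_integral_add, measurable, intro add_mono)
         (auto simp: c_def intro!: nn_integral_phi_heat_semigroup_exp_le that p \<phi>_nonneg \<phi>_le \<Phi> exp_moment
          product)
  qed
  have "Vphi M W W' g \<phi> t x y \<le> (\<integral>\<^sup>+s\<in>{0<..t}. (\<integral>\<^sup>+r\<in>{0<..t - s}. (\<integral>\<^sup>+\<omega>.
      (ennreal (\<phi> (x + W s \<omega>)) * ?P\<phi> r (y + W' s \<omega>) + ennreal (\<phi> (y + W' s \<omega>)) * ?P\<phi> r (x + W s \<omega>))
      * exp_enn (total_interaction g x y \<omega>) \<partial>M) \<partial>lborel) \<partial>lborel)"
    by (rule Vphi_le_time_integral[OF g _ \<phi>_nonneg]) simp
  also have "\<dots> \<le> (\<integral>\<^sup>+s\<in>{0<..t}. (\<integral>\<^sup>+r\<in>{0<..t - s}.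
      c * (?Q x s * ?Q y (s + r)) + c * (?Q y s * ?Q x (s + r)) \<partial>lborel) \<partial>lborel)"
    using expectation_le
    by (intro nn_integral_mono) (auto simp: indicator_def mult.assoc intro!: nn_integral_mono)
  also have "\<dots> = c * (\<integral>\<^sup>+s\<in>{0<..t}. (\<integral>\<^sup>+r\<in>{0<..t - s}. ?Q x s * ?Q y (s + r) \<partial>lborel) \<partial>lborel)
      + c * (\<integral>\<^sup>+s\<in>{0<..t}. (\<integral>\<^sup>+r\<in>{0<..t - s}. ?Q y s * ?Q x (s + r) \<partial>lborel) \<partial>lborel)"
    by (simp add: distrib_right nn_integral_add nn_integral_cmult mult.assoc)
  also have "\<dots> \<le> c * (ennreal (Qtilde K p t x) * ennreal (Qtilde K p t y))
      + c * (ennreal (Qtilde K p t y) * ennreal (Qtilde K p t x))"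
    unfolding ennreal_Qtilde[OF t less_trans[OF zero_less_one p]]
    by (intro add_mono mult_left_mono nn_integral_triangle_le_product) auto
  also have "\<dots> = ennreal (4 * \<Phi>\<^sup>2 * Qtilde K p t x * Qtilde K p t y)"
    using Qtilde_nonneg[of K p t x] Qtilde_nonneg[of K p t y]
    by (simp add: c_def ennreal_mult[symmetric] ennreal_plus[symmetric] del: ennreal_plus)
  finally show ?thesis .
qed

end

lemma continuous_compact_support_le_indicator:
  fixes \<phi> :: "'a::euclidean_space \<Rightarrow> real"
  assumes cont: "continuous_on UNIV \<phi>" and supp: "\<And>x. K < norm x \<Longrightarrow> \<phi> x = 0"
  obtains \<Phi> where "0 \<le> \<Phi>" "\<And>x. \<phi> x \<le> \<Phi> * indicator {x. norm x \<le> K} x"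
proof -
  have "compact (\<phi> ` cball 0 K)"
    by (rule compact_continuous_image[OF continuous_on_subset[OF cont]]) auto
  then obtain B where "\<forall>v \<in> \<phi> ` cball 0 K. norm v \<le> B"
    using compact_imp_bounded bounded_iff by metis
  then have B: "\<bar>\<phi> x\<bar> \<le> B" if "norm x \<le> K" for x
    using that by auto
  show ?thesis
  proof (rule that[of "max 0 B"])
    show "\<phi> x \<le> max 0 B * indicator {x. norm x \<le> K} x" for x
      using B[of x] supp[of x] by (cases "norm x \<le> K") (auto simp: indicator_def)
  qed simp
qed

theorem lemma4p1:
  fixes M :: "'a measure"
    and W W' :: "real \<Rightarrow> 'a \<Rightarrow> real^'d"
    and g :: "real^'d \<Rightarrow> real^'d \<Rightarrow> real"
    and \<phi> :: "real^'d \<Rightarrow> real"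
    and \<alpha> p \<epsilon> K :: real
  assumes BM: "indep_std_BM_pair M W W'"
    and dim: "CARD('d) \<ge> 3"
    and alpha: "\<alpha> > 2"
    and p: "1 < p" "p < 10 / 9"
    and g_meas: "(\<lambda>(x, y). g x y) \<in> borel_measurable borel"
    and g_nonneg: "\<And>x y. 0 \<le> g x y"
    and eps: "\<epsilon> > 0"
    and g_bound: "\<And>x y. g x y \<le> \<epsilon> * (if x = y then 1 else min (norm (x - y) powr (- \<alpha>)) 1)"
    and small: "\<And>x y. (\<integral>\<^sup>+ \<omega>. exp_enn (ennreal (p / (p - 1)) *
                   (\<integral>\<^sup>+ s\<in>{0..}. ennreal (g (x + W s \<omega>) (y + W' s \<omega>)) \<partial>lborel)) \<partial>M) \<le> 2"
    and phi_cont: "continuous_on UNIV \<phi>"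
    and phi_nonneg: "\<And>x. 0 \<le> \<phi> x"
    and phi_supp: "\<And>x. K < norm x \<Longrightarrow> \<phi> x = 0"
    and K: "K > 2"
  shows "\<exists>C. \<forall>t \<ge> 0. \<forall>x y.
           Vphi M W W' g \<phi> t x y \<le> ennreal (C * Qtilde K p t x * Qtilde K p t y)"
proof -
  interpret BM_pair M W W'
    using BM by unfold_locales
  obtain \<Phi> where \<Phi>: "0 \<le> \<Phi>" and \<phi>_le: "\<And>y. \<phi> y \<le> \<Phi> * indicator {y. norm y \<le> K} y"
    using continuous_compact_support_le_indicator[OF phi_cont phi_supp] by blast
  have \<phi>_meas: "\<phi> \<in> borel_measurable borel"
    using phi_cont by (rule borel_measurable_continuous_onI)
  have "Vphi M W W' g \<phi> t x y \<le> ennreal (4 * \<Phi>\<^sup>2 * Qtilde K p t x * Qtilde K p t y)" if "0 \<le> t" for t x y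
    using small[of x y] unfolding total_interaction_def[symmetric]
    by (rule Vphi_le[OF p(1) that g_meas \<phi>_meas _ phi_nonneg \<phi>_le \<Phi>])
  then show ?thesis
    by blast
qed

end
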